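(* Let $\mathbb F$ be a field and define $P_n:=z^2\bigl(y\,\mathrm{HC}_n+y^2\,\mathrm{HC}_n^2\bigr)$, where $y,z$ are variables distinct from the variables of $\mathrm{HC}_n$. Then the $\mathsf p$-family $(P)=(P_n)_{n\in\mathbb N}$ does not lie in $\mathrm{VNPC}(\le_{\mathsf p})$.
   Context: A $\mathsf p$-family $(f)=(f_n)_{n\in\mathbb N}$ is a sequence of multivariate polynomials over $\mathbb F$ whose number of variables and degree are polynomially bounded in $n$. $f\le g$ (projection) means $f=g(\alpha_1,\dots,\alpha_M)$ where each $\alpha_i$ is a variable of $f$ or an element of $\mathbb F$; $(f)\le_{\mathsf p}(g)$ if there is a polynomially bounded $t$ with $f_n\le g_{t(n)}$ for all $n$. $\mathrm{HC}_n=\sum_{\pi}\prod_{i=1}^n x_{i,\pi(i)}$, summing over permutations $\pi$ of $\{1,\dots,n\}$ that are $n$-cycles. $\mathrm{VNP}$ is the set of $\mathsf p$-families $(f)$ with $(f)\le_{\mathsf p}(\mathrm{HC})$, and $\mathrm{VNPC}(\le_{\mathsf p})=\{(f)\in\mathrm{VNP}:(\mathrm{HC})\le_{\mathsf p}(f)\}$. *)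

theory Defs
  imports "HOL-Library.Poly_Mapping" "HOL-Combinatorics.Permutations" "HOL-Library.Nat_Bijection"
begin

type_synonym 'a mpoly = "(nat \<Rightarrow>\<^sub>0 nat) \<Rightarrow>\<^sub>0 'a"

definition Var :: "nat \<Rightarrow> 'a::comm_ring_1 mpoly" where
  "Var i = Poly_Mapping.single (Poly_Mapping.single i 1) 1"

definition Const :: "'a::comm_ring_1 \<Rightarrow> 'a mpoly" where
  "Const c = Poly_Mapping.single 0 c"

definition mvars :: "'a::comm_ring_1 mpoly \<Rightarrow> nat set" where
  "mvars p = (\<Union>m \<in> Poly_Mapping.keys p. Poly_Mapping.keys m)"

definition nvars :: "'a::comm_ring_1 mpoly \<Rightarrow> nat" where
  "nvars p = card (mvars p)"

definition tdeg :: "'a::comm_ring_1 mpoly \<Rightarrow> nat" where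
  "tdeg p = Max (insert 0 ((\<lambda>m. sum (Poly_Mapping.lookup m) (Poly_Mapping.keys m)) ` Poly_Mapping.keys p))"

definition subst :: "(nat \<Rightarrow> 'a::comm_ring_1 mpoly) \<Rightarrow> 'a mpoly \<Rightarrow> 'a mpoly" where
  "subst \<sigma> g = (\<Sum>m \<in> Poly_Mapping.keys g.
      Const (Poly_Mapping.lookup g m) * (\<Prod>v \<in> Poly_Mapping.keys m. \<sigma> v ^ Poly_Mapping.lookup m v))"

definition proj :: "'a::comm_ring_1 mpoly \<Rightarrow> 'a mpoly \<Rightarrow> bool" where
  "proj f g \<longleftrightarrow> (\<exists>\<sigma>. (\<forall>i. (\<exists>j. \<sigma> i = Var j) \<or> (\<exists>c. \<sigma> i = Const c)) \<and> f = subst \<sigma> g)"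

definition polybounded :: "(nat \<Rightarrow> nat) \<Rightarrow> bool" where
  "polybounded t \<longleftrightarrow> (\<exists>c. \<forall>n. t n \<le> c * (n + 1) ^ c)"

definition pfamily :: "(nat \<Rightarrow> 'a::comm_ring_1 mpoly) \<Rightarrow> bool" where
  "pfamily f \<longleftrightarrow> polybounded (\<lambda>n. nvars (f n)) \<and> polybounded (\<lambda>n. tdeg (f n))"

definition p_reduces :: "(nat \<Rightarrow> 'a::comm_ring_1 mpoly) \<Rightarrow> (nat \<Rightarrow> 'a mpoly) \<Rightarrow> bool" where
  "p_reduces f g \<longleftrightarrow> (\<exists>t. polybounded t \<and> (\<forall>n. proj (f n) (g (t n))))"

definition is_ncycle :: "nat \<Rightarrow> (nat \<Rightarrow> nat) \<Rightarrow> bool" where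
  "is_ncycle n \<pi> \<longleftrightarrow> \<pi> permutes {1..n} \<and> (\<forall>i\<in>{1..n}. \<forall>j\<in>{1..n}. \<exists>k. (\<pi> ^^ k) i = j)"

text \<open>Variable x_{i,j} of HC is encoded as variable number prod_encode(i,j)+2; variables 0 and 1
  are reserved (used for y and z below).\<close>
definition xvar :: "nat \<Rightarrow> nat \<Rightarrow> nat" where
  "xvar i j = prod_encode (i, j) + 2"

definition HC :: "nat \<Rightarrow> 'a::comm_ring_1 mpoly" where
  "HC n = (\<Sum>\<pi> \<in> {\<pi>. is_ncycle n \<pi>}. \<Prod>i = 1..n. Var (xvar i (\<pi> i)))"

definition VNP :: "(nat \<Rightarrow> 'a::comm_ring_1 mpoly) set" where
  "VNP = {f. pfamily f \<and> p_reduces f HC}"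

definition VNPC :: "(nat \<Rightarrow> 'a::comm_ring_1 mpoly) set" where
  "VNPC = {f \<in> VNP. p_reduces HC f}"

text \<open>y = Var 0, z = Var 1.\<close>
definition Pfam :: "nat \<Rightarrow> 'a::comm_ring_1 mpoly" where
  "Pfam n = Var 1 ^ 2 * (Var 0 * HC n + Var 0 ^ 2 * HC n ^ 2)"

end

theory Submission
  imports Defs "HOL-Computational_Algebra.Polynomial"
begin

text \<open>\<open>HC 1\<close> is the single variable \<open>x\<^sub>1\<^sub>,\<^sub>1\<close>, whereas every substitution instance of \<open>P\<^sub>m\<close> has
  the shape \<open>A\<^sup>2 a (1 + a)\<close> with \<open>A = \<sigma>(z)\<close> and \<open>a = \<sigma>(y) \<sigma>(HC\<^sub>m)\<close>. Evaluating every variable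
  at the indeterminate \<open>X\<close> of \<open>\<bbbF>[X]\<close> turns \<open>x\<^sub>1\<^sub>,\<^sub>1\<close> into \<open>X\<close>, of degree 1, and
  \<open>A\<^sup>2 a (1 + a)\<close> into zero or a polynomial of even degree. Hence \<open>HC 1\<close> is not even a
  substitution instance, let alone a projection, of any \<open>P\<^sub>m\<close>.\<close>

definition eval_monom :: "(nat \<Rightarrow> 'b::comm_semiring_1) \<Rightarrow> (nat \<Rightarrow>\<^sub>0 nat) \<Rightarrow> 'b" where
  "eval_monom \<rho> m = (\<Prod>v\<in>Poly_Mapping.keys m. \<rho> v ^ Poly_Mapping.lookup m v)"

definition eval_mpoly :: "(nat \<Rightarrow> 'a::comm_ring_1 poly) \<Rightarrow> 'a mpoly \<Rightarrow> 'a poly" where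
  "eval_mpoly \<rho> p = (\<Sum>m\<in>Poly_Mapping.keys p. [:Poly_Mapping.lookup p m:] * eval_monom \<rho> m)"

lemma eval_monom_superset:
  assumes "finite S" "Poly_Mapping.keys m \<subseteq> S"
  shows "eval_monom \<rho> m = (\<Prod>v\<in>S. \<rho> v ^ Poly_Mapping.lookup m v)"
  unfolding eval_monom_def
  by (rule prod.mono_neutral_left) (use assms in \<open>auto simp: in_keys_iff\<close>)

lemma eval_monom_zero [simp]: "eval_monom \<rho> 0 = 1"
  by (simp add: eval_monom_def)

lemma eval_monom_add: "eval_monom \<rho> (m + n) = eval_monom \<rho> m * eval_monom \<rho> n"
proof -
  let ?S = "Poly_Mapping.keys m \<union> Poly_Mapping.keys n"
  have "eval_monom \<rho> (m + n) = (\<Prod>v\<in>?S. \<rho> v ^ Poly_Mapping.lookup (m + n) v)"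
    by (rule eval_monom_superset) (auto simp: keys_add)
  also have "\<dots> = (\<Prod>v\<in>?S. \<rho> v ^ Poly_Mapping.lookup m v * \<rho> v ^ Poly_Mapping.lookup n v)"
    by (simp add: lookup_add power_add)
  also have "\<dots> = eval_monom \<rho> m * eval_monom \<rho> n"
    by (simp add: prod.distrib eval_monom_superset[of ?S])
  finally show ?thesis .
qed

lemma eval_mpoly_superset:
  assumes "finite S" "Poly_Mapping.keys p \<subseteq> S"
  shows "eval_mpoly \<rho> p = (\<Sum>m\<in>S. [:Poly_Mapping.lookup p m:] * eval_monom \<rho> m)"
  unfolding eval_mpoly_def
  by (rule sum.mono_neutral_left) (use assms in \<open>auto simp: in_keys_iff\<close>)

lemma eval_mpoly_zero [simp]: "eval_mpoly \<rho> 0 = 0"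
  by (simp add: eval_mpoly_def)

lemma eval_mpoly_single: "eval_mpoly \<rho> (Poly_Mapping.single m c) = [:c:] * eval_monom \<rho> m"
  by (simp add: eval_mpoly_def)

lemma eval_mpoly_one [simp]: "eval_mpoly \<rho> 1 = 1"
  by (metis eval_mpoly_single eval_monom_zero mult_1 one_pCons single_one)

lemma eval_mpoly_Const [simp]: "eval_mpoly \<rho> (Const c) = [:c:]"
  by (simp add: Const_def eval_mpoly_single)

lemma eval_mpoly_Var [simp]: "eval_mpoly \<rho> (Var i) = \<rho> i"
  by (simp add: Var_def eval_mpoly_single eval_monom_def)

lemma eval_mpoly_add: "eval_mpoly \<rho> (p + q) = eval_mpoly \<rho> p + eval_mpoly \<rho> q"
proof -
  let ?S = "Poly_Mapping.keys p \<union> Poly_Mapping.keys q"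
  have "eval_mpoly \<rho> (p + q) = (\<Sum>m\<in>?S. [:Poly_Mapping.lookup (p + q) m:] * eval_monom \<rho> m)"
    by (rule eval_mpoly_superset) (auto simp: keys_add)
  also have "\<dots> = (\<Sum>m\<in>?S. [:Poly_Mapping.lookup p m:] * eval_monom \<rho> m
                           + [:Poly_Mapping.lookup q m:] * eval_monom \<rho> m)"
    by (simp add: lookup_add smult_add_left)
  also have "\<dots> = eval_mpoly \<rho> p + eval_mpoly \<rho> q"
    by (simp add: sum.distrib eval_mpoly_superset[of ?S])
  finally show ?thesis .
qed

lemma eval_mpoly_sum: "eval_mpoly \<rho> (sum f I) = (\<Sum>i\<in>I. eval_mpoly \<rho> (f i))"
  by (induction I rule: infinite_finite_induct) (auto simp: eval_mpoly_add)

lemma sum_single_lookup_keys: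
  "(\<Sum>m\<in>Poly_Mapping.keys p. Poly_Mapping.single m (Poly_Mapping.lookup p m)) = p"
  by (rule poly_mapping_eqI) (auto simp: lookup_sum lookup_single when_def in_keys_iff)

lemma eval_mpoly_mult: "eval_mpoly \<rho> (p * q) = eval_mpoly \<rho> p * eval_mpoly \<rho> q"
proof -
  have "p * q = (\<Sum>a\<in>Poly_Mapping.keys p. Poly_Mapping.single a (Poly_Mapping.lookup p a)) *
                (\<Sum>b\<in>Poly_Mapping.keys q. Poly_Mapping.single b (Poly_Mapping.lookup q b))"
    by (simp only: sum_single_lookup_keys)
  also have "\<dots> = (\<Sum>a\<in>Poly_Mapping.keys p. \<Sum>b\<in>Poly_Mapping.keys q.
       Poly_Mapping.single (a + b) (Poly_Mapping.lookup p a * Poly_Mapping.lookup q b))"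
    by (simp add: sum_product mult_single)
  finally have "eval_mpoly \<rho> (p * q) = (\<Sum>a\<in>Poly_Mapping.keys p. \<Sum>b\<in>Poly_Mapping.keys q.
       [:Poly_Mapping.lookup p a:] * eval_monom \<rho> a * ([:Poly_Mapping.lookup q b:] * eval_monom \<rho> b))"
    by (simp add: eval_mpoly_sum eval_mpoly_single eval_monom_add ac_simps)
  also have "\<dots> = eval_mpoly \<rho> p * eval_mpoly \<rho> q"
    by (simp add: eval_mpoly_def sum_product)
  finally show ?thesis .
qed

lemma eval_mpoly_power: "eval_mpoly \<rho> (p ^ n) = eval_mpoly \<rho> p ^ n"
  by (induction n) (auto simp: eval_mpoly_mult)

lemma eval_mpoly_prod: "eval_mpoly \<rho> (prod f I) = (\<Prod>i\<in>I. eval_mpoly \<rho> (f i))"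
  by (induction I rule: infinite_finite_induct) (auto simp: eval_mpoly_mult)

lemma eval_mpoly_subst: "eval_mpoly \<rho> (subst \<sigma> g) = eval_mpoly (\<lambda>v. eval_mpoly \<rho> (\<sigma> v)) g"
proof -
  have "eval_mpoly \<rho> (subst \<sigma> g) = (\<Sum>m\<in>Poly_Mapping.keys g. [:Poly_Mapping.lookup g m:] *
      (\<Prod>v\<in>Poly_Mapping.keys m. eval_mpoly \<rho> (\<sigma> v) ^ Poly_Mapping.lookup m v))"
    unfolding subst_def by (simp add: eval_mpoly_sum eval_mpoly_mult eval_mpoly_prod eval_mpoly_power)
  then show ?thesis
    by (simp add: eval_mpoly_def eval_monom_def)
qed

lemma eval_mpoly_Pfam:
  "eval_mpoly \<rho> (Pfam m) = \<rho> 1 ^ 2 * (\<rho> 0 * eval_mpoly \<rho> (HC m) + \<rho> 0 ^ 2 * eval_mpoly \<rho> (HC m) ^ 2)"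
  by (simp add: Pfam_def eval_mpoly_mult eval_mpoly_add eval_mpoly_power)

lemma HC_1: "HC 1 = Var (xvar 1 1)"
proof -
  have "{\<pi>. is_ncycle 1 \<pi>} = {id}"
    by (auto simp: is_ncycle_def intro: exI[of _ 0])
  then show ?thesis by (simp add: HC_def)
qed

lemma even_degree_square_mult_one_plus:
  fixes A a :: "'a::idom poly"
  assumes "A ^ 2 * a * (1 + a) \<noteq> 0"
  shows "even (degree (A ^ 2 * a * (1 + a)))"
proof -
  have "A \<noteq> 0" "a \<noteq> 0" "1 + a \<noteq> 0"
    using assms by auto
  then have deg: "degree (A ^ 2 * a * (1 + a)) = 2 * degree A + degree a + degree (1 + a)"
    by (simp add: degree_mult_eq degree_power_eq)
  have "degree (1 + a) = degree a"
  proof (cases "degree a = 0")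
    case True
    then show ?thesis
      by (metis degree_add_le degree_1 le_zero_eq max_0L)
  next
    case False
    then show ?thesis
      by (simp add: degree_add_eq_right)
  qed
  then show ?thesis
    using deg by simp
qed

theorem lemma3:
  shows "(Pfam :: nat \<Rightarrow> 'a::field mpoly) \<notin> VNPC"
proof
  assume "(Pfam :: nat \<Rightarrow> 'a::field mpoly) \<in> VNPC"
  then obtain t where "\<forall>n. proj (HC n :: 'a mpoly) (Pfam (t n))"
    by (auto simp: VNPC_def p_reduces_def)
  then obtain \<sigma> where \<sigma>: "(HC 1 :: 'a mpoly) = subst \<sigma> (Pfam (t 1))"
    by (auto simp: proj_def)
  define \<rho> where "\<rho> = (\<lambda>v. eval_mpoly (\<lambda>_. [:0, 1:]) (\<sigma> v))"
  define a where "a = \<rho> 0 * eval_mpoly \<rho> (HC (t 1))"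
  have "[:0, 1:] = eval_mpoly (\<lambda>_. [:0, 1:]) (HC 1 :: 'a mpoly)"
    by (simp only: HC_1 eval_mpoly_Var)
  also have "\<dots> = eval_mpoly \<rho> (Pfam (t 1))"
    by (simp only: \<sigma> eval_mpoly_subst \<rho>_def)
  also have "\<dots> = \<rho> 1 ^ 2 * a * (1 + a)"
    by (simp add: eval_mpoly_Pfam a_def algebra_simps power2_eq_square)
  finally have X_eq: "[:0, 1:] = \<rho> 1 ^ 2 * a * (1 + a)" .
  have "even (degree ([:0, 1:] :: 'a poly))"
    unfolding X_eq by (rule even_degree_square_mult_one_plus) (metis X_eq pCons_eq_0_iff one_neq_zero)
  then show False
    by simp
qed

end
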